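(* Consider the two-graph Moran process on $n$ vertices with mutant graph $G_M=K_n$ (the clique) and resident graph $G_R=CId$, the circulant graph of even degree $d$. (a) If $d\in\Theta(1)$, then the fixation probability satisfies $$f_{G_R,G_M}(r)\le\left[e^{1/r}-\frac{1}{r^n}\frac{1}{n!}\frac{1}{1-\frac1r}\right]^{-1}\ \text{for } r>1,\qquad f_{G_R,G_M}(r)\le\left[e^{1/r}-\frac{1}{r^n}\frac{1}{n!}-o(1)\right]^{-1}\ \text{for } r\le 1;$$ in particular, for constant $r>0$ the upper bound tends to $e^{-1/r}$. (b) If $d\in\omega(1)$, then for $r>0$, $$f_{G_R,G_M}(r)\le\left(1-\frac1r\right)\left[1-\frac{1}{r^{g(n)}}-o(1)\right]^{-1},$$ where $g(n)$ is any function of $n$ with $g(n)\in\omega(1)$ and $g(n)\in o(d)$; in particular, for $r>1$ this bound tends to $1-\frac1r$.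
   Context: Two-graph Moran process: vertex set $V=\{1,\dots,n\}$; resident graph $G_R=(V,E_R)$ and mutant graph $G_M=(V,E_M)$, strongly connected, with row-stochastic weight matrices $W_R=[w^R_{ij}]$, $W_M=[w^M_{ij}]$ ($w^R_{ij}>0$ iff $(i,j)\in E_R$, similarly for $M$). The state is the mutant set $S$; residents have fitness $1$, mutants fitness $r>0$. Each step a vertex $i$ is chosen with probability proportional to fitness; if $i$ is a mutant, it picks $j$ with probability $w^M_{ij}$ and $j$ becomes a mutant; if a resident, it picks $j$ with probability $w^R_{ij}$ and $j$ becomes a resident. Absorption at $S=\emptyset$ or $S=V$ (fixation). The fixation probability $f_{G_R,G_M}(r)$ is the probability of fixation when starting with one mutant at a uniformly random vertex. Undirected graphs are unweighted ($w_{ij}=1/\deg(i)$ for neighbours $j$). For even $d$, $CId$ is the circulant graph $Ci_n(1,2,\dots,d/2)$: vertex set $\{1,\dots,n\}$, each vertex $i$ adjacent to the vertices $((i-1\pm k)\bmod n)+1$ for $k=1,\dots,d/2$ (so $CI2$ is the undirected cycle $C_n$). Asymptotic notation is as $n\to\infty$. *)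

theory Defs
  imports "HOL-Analysis.Analysis" "HOL-Library.Landau_Symbols"
begin

text \<open>Vertices are 0..<n (the paper uses 1..n; shift by one).
 Weight matrices are functions nat => nat => real, meaningful on indices < n.\<close>

definition circ_nbrs :: "nat \<Rightarrow> nat \<Rightarrow> nat \<Rightarrow> nat set" where
  "circ_nbrs n d i = {nat ((int i + k) mod int n) | k::int. 1 \<le> \<bar>k\<bar> \<and> \<bar>k\<bar> \<le> int (d div 2)}"

definition circ_weights :: "nat \<Rightarrow> nat \<Rightarrow> nat \<Rightarrow> nat \<Rightarrow> real" where
  "circ_weights n d i j = (if j \<in> circ_nbrs n d i then 1 / real (card (circ_nbrs n d i)) else 0)"

definition clique_weights :: "nat \<Rightarrow> nat \<Rightarrow> nat \<Rightarrow> real" where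
  "clique_weights n i j = (if i \<noteq> j then 1 / real (n - 1) else 0)"

definition moran_trans ::
  "nat \<Rightarrow> (nat \<Rightarrow> nat \<Rightarrow> real) \<Rightarrow> (nat \<Rightarrow> nat \<Rightarrow> real) \<Rightarrow> real \<Rightarrow> nat set \<Rightarrow> nat set \<Rightarrow> real" where
  "moran_trans n WR WM r S T =
     (\<Sum>i<n. \<Sum>j<n.
        (if i \<in> S then r * WM i j * (if insert j S = T then 1 else 0)
                   else WR i j * (if S - {j} = T then 1 else 0)))
     / (r * real (card S) + real (n - card S))"

text \<open>Probability that the process started in S is in the fixation state V = {..<n} after t steps
 (V is absorbing, so this is the probability of having fixed by time t).\<close>
fun fix_by ::
  "nat \<Rightarrow> (nat \<Rightarrow> nat \<Rightarrow> real) \<Rightarrow> (nat \<Rightarrow> nat \<Rightarrow> real) \<Rightarrow> real \<Rightarrow> nat \<Rightarrow> nat set \<Rightarrow> real" where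
  "fix_by n WR WM r 0 S = (if S = {..<n} then 1 else 0)"
| "fix_by n WR WM r (Suc t) S = (\<Sum>T\<in>Pow {..<n}. moran_trans n WR WM r S T * fix_by n WR WM r t T)"

definition fixation_from ::
  "nat \<Rightarrow> (nat \<Rightarrow> nat \<Rightarrow> real) \<Rightarrow> (nat \<Rightarrow> nat \<Rightarrow> real) \<Rightarrow> real \<Rightarrow> nat set \<Rightarrow> real" where
  "fixation_from n WR WM r S = (SUP t. fix_by n WR WM r t S)"

definition fixation_prob ::
  "nat \<Rightarrow> (nat \<Rightarrow> nat \<Rightarrow> real) \<Rightarrow> (nat \<Rightarrow> nat \<Rightarrow> real) \<Rightarrow> real \<Rightarrow> real" where
  "fixation_prob n WR WM r = (\<Sum>v<n. fixation_from n WR WM r {v}) / real n"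

definition fCK :: "(nat \<Rightarrow> nat) \<Rightarrow> real \<Rightarrow> nat \<Rightarrow> real" where
  "fCK d r n = fixation_prob n (circ_weights n (d n)) (clique_weights n) r"

end

theory Submission
  imports Defs
begin

text \<open>
  Only the size \<open>k\<close> of the mutant set matters for the bound. In the clique, mutants of a set of
  size \<open>k\<close> invade at total rate \<open>r k (n - k) / (n - 1) \<le> r k\<close>; in the circulant graph \<open>CId\<close>
  residents invade the mutant set at total rate at least \<open>max 1 (k (d + 1 - k) / d)\<close>, since
  every nonempty proper vertex set receives at least \<open>d\<close> edges (at least \<open>d / 2\<close> along each
  direction of the cycle) and every vertex of the set has at least \<open>d + 1 - k\<close> neighbours
  outside. Hence \<open>|S|\<close> is dominated by a birth--death chain with ratios \<open>\<rho> k\<close> of losses to gains,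
  and the potential \<open>h k = (\<Sum>j<k. \<Prod>i\<in>{1..j}. \<rho> i) / Z\<close> is a supermartingale, giving
  \<open>f \<le> 1 / Z\<close>. With \<open>\<rho> k = 1 / (r k)\<close>, \<open>Z\<close> is a partial sum of \<open>exp (1 / r)\<close>. When
  \<open>d \<rightarrow> \<infinity>\<close>, taking \<open>\<rho> k = (d + 1 - M) / (d r)\<close> for \<open>k \<le> M = o(d)\<close> makes \<open>Z\<close> a long
  geometric sum with ratio tending to \<open>1 / r\<close>.
\<close>

definition cut_weight :: "(nat \<Rightarrow> nat \<Rightarrow> real) \<Rightarrow> nat set \<Rightarrow> nat set \<Rightarrow> real" where
  "cut_weight W A B = (\<Sum>i\<in>A. \<Sum>j\<in>B. W i j)"

lemma cut_weight_nonneg: "(\<And>i j. W i j \<ge> 0) \<Longrightarrow> cut_weight W A B \<ge> 0"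
  unfolding cut_weight_def by (intro sum_nonneg) auto

lemma moran_trans_nonneg:
  assumes "r > 0" and "\<And>i j. WR i j \<ge> 0" and "\<And>i j. WM i j \<ge> 0"
  shows "moran_trans n WR WM r S T \<ge> 0"
  unfolding moran_trans_def using assms by (intro divide_nonneg_nonneg sum_nonneg) auto

lemma sum_moran_trans_mult:
  assumes S: "S \<subseteq> {..<n}"
  shows "(\<Sum>T\<in>Pow {..<n}. moran_trans n WR WM r S T * g T) =
    (\<Sum>i<n. \<Sum>j<n. if i \<in> S then r * WM i j * g (insert j S) else WR i j * g (S - {j}))
      / (r * real (card S) + real (n - card S))"
proof -
  define D where "D = r * real (card S) + real (n - card S)"
  define c where "c i j T = (if i \<in> S then r * WM i j * (if insert j S = T then 1 else 0)
                   else WR i j * (if S - {j} = T then 1 else 0))" for i j T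
  have "(\<Sum>T\<in>Pow {..<n}. moran_trans n WR WM r S T * g T)
      = (\<Sum>T\<in>Pow {..<n}. \<Sum>i<n. \<Sum>j<n. c i j T * g T) / D"
    unfolding moran_trans_def c_def D_def
    by (simp add: sum_distrib_right sum_divide_distrib)
  also have "(\<Sum>T\<in>Pow {..<n}. \<Sum>i<n. \<Sum>j<n. c i j T * g T)
      = (\<Sum>i<n. \<Sum>j<n. \<Sum>T\<in>Pow {..<n}. c i j T * g T)"
    by (subst sum.swap, rule sum.cong, rule refl, rule sum.swap)
  also have "\<dots> = (\<Sum>i<n. \<Sum>j<n. if i \<in> S then r * WM i j * g (insert j S) else WR i j * g (S - {j}))"
  proof (intro sum.cong refl)
    fix i j assume "j \<in> {..<n}"
    then have "insert j S \<in> Pow {..<n}" and "S - {j} \<in> Pow {..<n}" using S by auto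
    moreover have "(\<Sum>T\<in>Pow {..<n}. a * (if X = T then 1 else 0) * g T) = (\<Sum>T\<in>Pow {..<n}. if X = T then a * g T else 0)"
      for a X by (rule sum.cong) auto
    ultimately show "(\<Sum>T\<in>Pow {..<n}. c i j T * g T)
        = (if i \<in> S then r * WM i j * g (insert j S) else WR i j * g (S - {j}))"
      unfolding c_def by (cases "i \<in> S") simp_all
  qed
  finally show ?thesis unfolding D_def .
qed

lemma sum_row_insert_card:
  fixes w :: "nat \<Rightarrow> real"
  assumes S: "S \<subseteq> {..<n}" and row: "(\<Sum>j<n. w j) = 1"
  shows "(\<Sum>j<n. w j * h (card (insert j S)))
    = h (card S) + (\<Sum>j\<in>{..<n} - S. w j) * (h (card S + 1) - h (card S))"
proof -
  have fS: "finite S" using S finite_subset by blast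
  have "(\<Sum>j<n. w j * h (card (insert j S))) - h (card S) = (\<Sum>j<n. w j * (h (card (insert j S)) - h (card S)))"
    using row by (simp add: right_diff_distrib sum_subtractf flip: sum_distrib_right)
  also have "\<dots> = (\<Sum>j\<in>{..<n} - S. w j * (h (card (insert j S)) - h (card S)))"
    using S by (intro sum.mono_neutral_right) (auto simp: insert_absorb)
  also have "\<dots> = (\<Sum>j\<in>{..<n} - S. w j) * (h (card S + 1) - h (card S))"
    using fS by (simp add: sum_distrib_right)
  finally show ?thesis by simp
qed

lemma sum_row_remove_card:
  fixes w :: "nat \<Rightarrow> real"
  assumes S: "S \<subseteq> {..<n}" and row: "(\<Sum>j<n. w j) = 1"
  shows "(\<Sum>j<n. w j * h (card (S - {j})))
    = h (card S) - (\<Sum>j\<in>S. w j) * (h (card S) - h (card S - 1))"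
proof -
  have fS: "finite S" using S finite_subset by blast
  have "(\<Sum>j<n. w j * h (card (S - {j}))) - h (card S) = (\<Sum>j<n. w j * (h (card (S - {j})) - h (card S)))"
    using row by (simp add: right_diff_distrib sum_subtractf flip: sum_distrib_right)
  also have "\<dots> = (\<Sum>j\<in>S. w j * (h (card (S - {j})) - h (card S)))"
    using S by (intro sum.mono_neutral_right) auto
  also have "\<dots> = (\<Sum>j\<in>S. w j) * (h (card S - 1) - h (card S))"
    using fS by (simp add: sum_distrib_right)
  finally show ?thesis by (simp add: algebra_simps)
qed

lemma moran_step_sum_card:
  fixes WR WM :: "nat \<Rightarrow> nat \<Rightarrow> real" and h :: "nat \<Rightarrow> real"
  assumes S: "S \<subseteq> {..<n}"
    and rowR: "\<And>i. i < n \<Longrightarrow> (\<Sum>j<n. WR i j) = 1"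
    and rowM: "\<And>i. i < n \<Longrightarrow> (\<Sum>j<n. WM i j) = 1"
  shows "(\<Sum>i<n. \<Sum>j<n. if i \<in> S then r * WM i j * h (card (insert j S)) else WR i j * h (card (S - {j})))
    = h (card S) * (r * real (card S) + real (n - card S))
      + r * cut_weight WM S ({..<n} - S) * (h (card S + 1) - h (card S))
      - cut_weight WR ({..<n} - S) S * (h (card S) - h (card S - 1))"
proof -
  have fS: "finite S" using S finite_subset by blast
  have card_compl: "card ({..<n} - S) = n - card S" using S fS by (simp add: card_Diff_subset)
  have "(\<Sum>i<n. \<Sum>j<n. if i \<in> S then r * WM i j * h (card (insert j S)) else WR i j * h (card (S - {j})))
      = (\<Sum>i\<in>S. r * (\<Sum>j<n. WM i j * h (card (insert j S))))
        + (\<Sum>i\<in>{..<n} - S. \<Sum>j<n. WR i j * h (card (S - {j})))"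
    using sum.subset_diff[OF S, of "\<lambda>i. \<Sum>j<n. if i \<in> S then r * WM i j * h (card (insert j S)) else WR i j * h (card (S - {j}))"]
    by (simp add: add.commute sum_distrib_left mult.assoc)
  also have "\<dots> = (\<Sum>i\<in>S. r * (h (card S) + (\<Sum>j\<in>{..<n} - S. WM i j) * (h (card S + 1) - h (card S))))
        + (\<Sum>i\<in>{..<n} - S. h (card S) - (\<Sum>j\<in>S. WR i j) * (h (card S) - h (card S - 1)))"
  proof (intro arg_cong2[where f = "(+)"] sum.cong refl)
    fix i assume "i \<in> S"
    then show "r * (\<Sum>j<n. WM i j * h (card (insert j S)))
        = r * (h (card S) + (\<Sum>j\<in>{..<n} - S. WM i j) * (h (card S + 1) - h (card S)))"
      using S rowM by (subst sum_row_insert_card) auto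
  next
    fix i assume "i \<in> {..<n} - S"
    then show "(\<Sum>j<n. WR i j * h (card (S - {j})))
        = h (card S) - (\<Sum>j\<in>S. WR i j) * (h (card S) - h (card S - 1))"
      using S rowR by (subst sum_row_remove_card) auto
  qed
  also have "\<dots> = h (card S) * (r * real (card S) + real (n - card S))
      + r * cut_weight WM S ({..<n} - S) * (h (card S + 1) - h (card S))
      - cut_weight WR ({..<n} - S) S * (h (card S) - h (card S - 1))"
    unfolding cut_weight_def
    by (simp add: sum.distrib sum_subtractf sum_distrib_left sum_distrib_right card_compl algebra_simps)
  finally show ?thesis .
qed

lemma sum_moran_trans_card_le:
  fixes WR WM :: "nat \<Rightarrow> nat \<Rightarrow> real" and h :: "nat \<Rightarrow> real"
  assumes S: "S \<subseteq> {..<n}" and n: "n \<ge> 1" and r: "r > 0"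
    and rowR: "\<And>i. i < n \<Longrightarrow> (\<Sum>j<n. WR i j) = 1"
    and rowM: "\<And>i. i < n \<Longrightarrow> (\<Sum>j<n. WM i j) = 1"
    and drift: "r * cut_weight WM S ({..<n} - S) * (h (card S + 1) - h (card S))
        \<le> cut_weight WR ({..<n} - S) S * (h (card S) - h (card S - 1))"
  shows "(\<Sum>T\<in>Pow {..<n}. moran_trans n WR WM r S T * h (card T)) \<le> h (card S)"
proof -
  define D where "D = r * real (card S) + real (n - card S)"
  have "card S \<le> n" using S by (metis card_lessThan card_mono finite_lessThan)
  then have "D > 0" using n r unfolding D_def
    by (cases "card S = 0") (auto intro: add_pos_nonneg)
  moreover have "(\<Sum>T\<in>Pow {..<n}. moran_trans n WR WM r S T * h (card T))
      = (h (card S) * D + r * cut_weight WM S ({..<n} - S) * (h (card S + 1) - h (card S))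
         - cut_weight WR ({..<n} - S) S * (h (card S) - h (card S - 1))) / D"
    unfolding D_def by (subst sum_moran_trans_mult[OF S], subst moran_step_sum_card[OF S rowR rowM]) simp_all
  ultimately show ?thesis using drift by (simp add: divide_le_eq)
qed

lemma fix_by_le_card_potential:
  fixes WR WM :: "nat \<Rightarrow> nat \<Rightarrow> real" and h :: "nat \<Rightarrow> real"
  assumes n: "n \<ge> 1" and r: "r > 0"
    and nR: "\<And>i j. WR i j \<ge> 0" and nM: "\<And>i j. WM i j \<ge> 0"
    and rowR: "\<And>i. i < n \<Longrightarrow> (\<Sum>j<n. WR i j) = 1"
    and rowM: "\<And>i. i < n \<Longrightarrow> (\<Sum>j<n. WM i j) = 1"
    and h_nonneg: "\<And>k. h k \<ge> 0" and h_n: "h n = 1"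
    and drift: "\<And>S. S \<subseteq> {..<n} \<Longrightarrow>
        r * cut_weight WM S ({..<n} - S) * (h (card S + 1) - h (card S))
        \<le> cut_weight WR ({..<n} - S) S * (h (card S) - h (card S - 1))"
  shows "S \<subseteq> {..<n} \<Longrightarrow> fix_by n WR WM r t S \<le> h (card S)"
proof (induction t arbitrary: S)
  case 0
  then show ?case using h_nonneg[of "card S"] h_n by auto
next
  case (Suc t)
  have "fix_by n WR WM r (Suc t) S = (\<Sum>T\<in>Pow {..<n}. moran_trans n WR WM r S T * fix_by n WR WM r t T)"
    by simp
  also have "\<dots> \<le> (\<Sum>T\<in>Pow {..<n}. moran_trans n WR WM r S T * h (card T))"
    using Suc.IH moran_trans_nonneg[OF r nR nM] by (intro sum_mono mult_left_mono) auto
  also have "\<dots> \<le> h (card S)"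
    by (rule sum_moran_trans_card_le[OF Suc.prems n r rowR rowM drift[OF Suc.prems]])
  finally show ?case .
qed

lemma fixation_prob_le_card_potential:
  fixes WR WM :: "nat \<Rightarrow> nat \<Rightarrow> real" and h :: "nat \<Rightarrow> real"
  assumes n: "n \<ge> 1" and r: "r > 0"
    and nR: "\<And>i j. WR i j \<ge> 0" and nM: "\<And>i j. WM i j \<ge> 0"
    and rowR: "\<And>i. i < n \<Longrightarrow> (\<Sum>j<n. WR i j) = 1"
    and rowM: "\<And>i. i < n \<Longrightarrow> (\<Sum>j<n. WM i j) = 1"
    and h_nonneg: "\<And>k. h k \<ge> 0" and h_n: "h n = 1"
    and drift: "\<And>S. S \<subseteq> {..<n} \<Longrightarrow>
        r * cut_weight WM S ({..<n} - S) * (h (card S + 1) - h (card S))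
        \<le> cut_weight WR ({..<n} - S) S * (h (card S) - h (card S - 1))"
  shows "fixation_prob n WR WM r \<le> h 1"
proof -
  have "fixation_from n WR WM r {v} \<le> h 1" if "v < n" for v
    unfolding fixation_from_def
    using fix_by_le_card_potential[OF assms, of "{v}"] that by (intro cSUP_least) auto
  then have "(\<Sum>v<n. fixation_from n WR WM r {v}) \<le> (\<Sum>v<n. h 1)"
    by (intro sum_mono) auto
  then show ?thesis using n unfolding fixation_prob_def by (simp add: divide_le_eq mult.commute)
qed

definition ratio_prod :: "(nat \<Rightarrow> real) \<Rightarrow> nat \<Rightarrow> real" where
  "ratio_prod \<rho> j = (\<Prod>i\<in>{1..j}. \<rho> i)"

lemma ratio_prod_0 [simp]: "ratio_prod \<rho> 0 = 1"
  by (simp add: ratio_prod_def)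

lemma ratio_prod_Suc: "ratio_prod \<rho> (Suc j) = ratio_prod \<rho> j * \<rho> (Suc j)"
  unfolding ratio_prod_def by (simp add: prod.nat_ivl_Suc' mult.commute)

lemma ratio_prod_pos: "(\<And>i. i \<ge> 1 \<Longrightarrow> \<rho> i > 0) \<Longrightarrow> ratio_prod \<rho> j > 0"
  unfolding ratio_prod_def by (intro prod_pos) auto

lemma fixation_prob_le_birth_death:
  fixes WR WM :: "nat \<Rightarrow> nat \<Rightarrow> real" and \<rho> :: "nat \<Rightarrow> real"
  assumes n: "n \<ge> 1" and r: "r > 0"
    and nR: "\<And>i j. WR i j \<ge> 0" and nM: "\<And>i j. WM i j \<ge> 0"
    and rowR: "\<And>i. i < n \<Longrightarrow> (\<Sum>j<n. WR i j) = 1"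
    and rowM: "\<And>i. i < n \<Longrightarrow> (\<Sum>j<n. WM i j) = 1"
    and \<rho>_pos: "\<And>i. i \<ge> 1 \<Longrightarrow> \<rho> i > 0"
    and ratio: "\<And>S. S \<subseteq> {..<n} \<Longrightarrow> S \<noteq> {} \<Longrightarrow> card S < n \<Longrightarrow>
        r * cut_weight WM S ({..<n} - S) * \<rho> (card S) \<le> cut_weight WR ({..<n} - S) S"
  shows "fixation_prob n WR WM r \<le> 1 / (\<Sum>j<n. ratio_prod \<rho> j)"
proof -
  define Z where "Z = (\<Sum>j<n. ratio_prod \<rho> j)"
  define h where "h k = (\<Sum>j<k. ratio_prod \<rho> j) / Z" for k
  have P_pos: "ratio_prod \<rho> j > 0" for j by (rule ratio_prod_pos[OF \<rho>_pos])
  have Z_pos: "Z > 0" unfolding Z_def using n P_pos by (intro sum_pos) (auto simp: lessThan_empty_iff)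
  have h_step: "h (Suc k) - h k = ratio_prod \<rho> k / Z" for k
    unfolding h_def by (simp add: diff_divide_distrib[symmetric])
  have "r * cut_weight WM S ({..<n} - S) * (h (card S + 1) - h (card S))
      \<le> cut_weight WR ({..<n} - S) S * (h (card S) - h (card S - 1))" if S: "S \<subseteq> {..<n}" for S
  proof (cases "S = {} \<or> card S = n")
    case True
    moreover have "S = {..<n}" if "card S = n"
      using S that by (simp add: card_subset_eq)
    ultimately show ?thesis
      using cut_weight_nonneg[of WR, OF nR] h_step[of "n - 1"] Z_pos P_pos n
      by (auto simp: cut_weight_def less_imp_le)
  next
    case False
    then have k: "card S \<noteq> 0" "card S < n"
      using S by (auto simp: finite_subset card_mono[of "{..<n}" S, simplified] order.not_eq_order_implies_strict)
    have "r * cut_weight WM S ({..<n} - S) * (h (card S + 1) - h (card S))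
        = r * cut_weight WM S ({..<n} - S) * \<rho> (card S) * (ratio_prod \<rho> (card S - 1) / Z)"
      using ratio_prod_Suc[of \<rho> "card S - 1"] k by (simp add: h_step)
    also have "\<dots> \<le> cut_weight WR ({..<n} - S) S * (ratio_prod \<rho> (card S - 1) / Z)"
      using ratio[OF S] False k P_pos Z_pos by (intro mult_right_mono) (auto intro: less_imp_le)
    also have "\<dots> = cut_weight WR ({..<n} - S) S * (h (card S) - h (card S - 1))"
      using h_step[of "card S - 1"] k by simp
    finally show ?thesis .
  qed
  moreover have "h k \<ge> 0" for k
    unfolding h_def using Z_pos P_pos by (intro divide_nonneg_nonneg sum_nonneg) (auto intro: less_imp_le)
  moreover have "h n = 1" unfolding h_def Z_def using Z_pos Z_def by simp
  ultimately have "fixation_prob n WR WM r \<le> h 1"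
    by (intro fixation_prob_le_card_potential[OF n r nR nM rowR rowM])
  then show ?thesis unfolding h_def Z_def by simp
qed

lemma clique_weights_nonneg: "clique_weights n i j \<ge> 0"
  unfolding clique_weights_def by simp

lemma clique_weights_row:
  assumes "n \<ge> 2" "i < n"
  shows "(\<Sum>j<n. clique_weights n i j) = 1"
proof -
  have "(\<Sum>j<n. clique_weights n i j) = (\<Sum>j\<in>{..<n} - {i}. 1 / real (n - 1))"
    unfolding clique_weights_def by (rule sum.mono_neutral_cong_right) auto
  then show ?thesis using assms by simp
qed

lemma cut_weight_clique_weights:
  assumes "S \<subseteq> {..<n}"
  shows "cut_weight (clique_weights n) S ({..<n} - S) = real (card S) * real (n - card S) / real (n - 1)"
proof -
  have "finite S" using assms finite_subset by blast
  then have "card ({..<n} - S) = n - card S" using assms by (simp add: card_Diff_subset)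
  moreover have "cut_weight (clique_weights n) S ({..<n} - S) = (\<Sum>i\<in>S. \<Sum>j\<in>{..<n} - S. 1 / real (n - 1))"
    unfolding cut_weight_def clique_weights_def by (intro sum.cong refl) auto
  ultimately show ?thesis by (simp only: sum_constant) simp
qed

locale transitive_injection =
  fixes V :: "'a set" and \<sigma> :: "'a \<Rightarrow> 'a"
  assumes finite_V: "finite V"
    and maps_V: "\<And>a. a \<in> V \<Longrightarrow> \<sigma> a \<in> V"
    and inj_V: "inj_on \<sigma> V"
    and reaches: "\<And>a b. a \<in> V \<Longrightarrow> b \<in> V \<Longrightarrow> \<exists>j. (\<sigma> ^^ j) a = b"
begin

lemma bij_betw_funpow_V: "bij_betw (\<sigma> ^^ j) V V"
proof -
  have "\<sigma> ` V = V" using maps_V by (intro endo_inj_surj[OF finite_V _ inj_V]) auto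
  then show ?thesis using inj_V by (intro bij_betw_funpow) (simp add: bij_betw_def)
qed

definition exits :: "'a set \<Rightarrow> nat \<Rightarrow> 'a set" where
  "exits S j = {a \<in> S. (\<sigma> ^^ j) a \<notin> S}"

lemma finite_exits: "S \<subseteq> V \<Longrightarrow> finite (exits S j)"
  unfolding exits_def using finite_V by (auto intro: finite_subset)

lemma funpow_image_eq_if_exits_empty:
  assumes "S \<subseteq> V" and "exits S j = {}"
  shows "(\<sigma> ^^ j) ` S = S"
proof -
  have "inj_on (\<sigma> ^^ j) S" using bij_betw_funpow_V assms(1) by (auto simp: bij_betw_def intro: inj_on_subset)
  moreover have "(\<sigma> ^^ j) ` S \<subseteq> S" using assms(2) unfolding exits_def by auto
  ultimately show ?thesis using assms(1) finite_V by (intro endo_inj_surj) (auto intro: finite_subset)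
qed

lemma exits_1_nonempty:
  assumes "S \<subseteq> V" "S \<noteq> {}" "S \<noteq> V"
  shows "exits S 1 \<noteq> {}"
proof
  assume "exits S 1 = {}"
  then have closed: "(\<sigma> ^^ j) a \<in> S" if "a \<in> S" for a j
    using that by (induction j) (auto simp: exits_def)
  obtain a b where "a \<in> S" "b \<in> V" "b \<notin> S" using assms by blast
  then show False using reaches[of a b] closed assms(1) by blast
qed

lemma exits_1_empty_if_consecutive:
  assumes "S \<subseteq> V" "exits S j = {}" "exits S (Suc j) = {}"
  shows "exits S 1 = {}"
proof -
  have "\<sigma> ((\<sigma> ^^ j) b) \<in> S" if "b \<in> S" for b
    using assms(3) that unfolding exits_def by auto
  then have "\<sigma> a \<in> S" if "a \<in> (\<sigma> ^^ j) ` S" for a using that by blast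
  then show ?thesis unfolding exits_def using funpow_image_eq_if_exits_empty[OF assms(1,2)] by auto
qed

text \<open>If some power \<open>\<sigma> ^^ h\<close> without fixed points keeps \<open>S\<close> invariant, then with every
  exit point \<open>a\<close> also \<open>(\<sigma> ^^ h) a\<close> is an exit point.\<close>
lemma two_le_card_exits:
  assumes S: "S \<subseteq> V" and inv: "exits S h = {}" and no_fix: "\<And>a. a \<in> V \<Longrightarrow> (\<sigma> ^^ h) a \<noteq> a"
    and ne: "exits S j \<noteq> {}"
  shows "2 \<le> card (exits S j)"
proof -
  obtain a where a: "a \<in> S" "(\<sigma> ^^ j) a \<notin> S" using ne unfolding exits_def by blast
  have "(\<sigma> ^^ h) a \<in> S" using inv a(1) unfolding exits_def by blast
  moreover have "(\<sigma> ^^ j) ((\<sigma> ^^ h) a) \<notin> S"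
  proof
    assume "(\<sigma> ^^ j) ((\<sigma> ^^ h) a) \<in> S"
    then have "(\<sigma> ^^ h) ((\<sigma> ^^ j) a) \<in> (\<sigma> ^^ h) ` S"
      using funpow_image_eq_if_exits_empty[OF S inv] by (metis comp_apply funpow_add add.commute)
    moreover have "(\<sigma> ^^ j) a \<in> V" using bij_betw_funpow_V a(1) S by (auto simp: bij_betw_def)
    ultimately have "(\<sigma> ^^ j) a \<in> S"
      using bij_betw_funpow_V[of h] S by (auto simp: bij_betw_def dest: inj_onD)
    with a(2) show False ..
  qed
  ultimately have "{a, (\<sigma> ^^ h) a} \<subseteq> exits S j" using a unfolding exits_def by auto
  moreover have "(\<sigma> ^^ h) a \<noteq> a" using no_fix a(1) S by blast
  ultimately show ?thesis using finite_exits[OF S] card_mono[of "exits S j" "{a, (\<sigma> ^^ h) a}"] by auto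
qed

text \<open>Either no power \<open>\<sigma> ^^ j\<close>, \<open>1 \<le> j \<le> m\<close>, keeps \<open>S\<close> invariant and each contributes an exit,
  or some does; then every non-invariant power contributes two exits, and at least half of
  the powers are non-invariant because no two consecutive ones are invariant.\<close>
lemma sum_card_exits_ge:
  assumes S: "S \<subseteq> V" "S \<noteq> {}" "S \<noteq> V"
    and no_fix: "\<And>a j. a \<in> V \<Longrightarrow> 0 < j \<Longrightarrow> j \<le> m \<Longrightarrow> (\<sigma> ^^ j) a \<noteq> a"
  shows "m \<le> (\<Sum>j=1..m. card (exits S j))"
proof -
  define JP where "JP = {j \<in> {1..m}. exits S j = {}}"
  define JN where "JN = {j \<in> {1..m}. exits S j \<noteq> {}}"
  have card_JP_JN: "card JP + card JN = m"
  proof -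
    have "card JP + card JN = card (JP \<union> JN)"
      unfolding JP_def JN_def by (subst card_Un_disjoint) auto
    also have "JP \<union> JN = {1..m}" unfolding JP_def JN_def by auto
    finally show ?thesis by simp
  qed
  have JN_le: "(\<Sum>j\<in>JN. card (exits S j)) \<le> (\<Sum>j=1..m. card (exits S j))"
    unfolding JN_def by (intro sum_mono2) auto
  show ?thesis
  proof (cases "JP = {}")
    case True
    then have "1 \<le> card (exits S j)" if "j \<in> {1..m}" for j
      using that finite_exits[OF S(1)] unfolding JP_def by (auto simp: Suc_le_eq card_gt_0_iff)
    then have "(\<Sum>j=1..m. 1) \<le> (\<Sum>j=1..m. card (exits S j))" by (intro sum_mono) auto
    then show ?thesis by simp
  next
    case False
    then obtain h where h: "h \<in> JP" by blast
    have "card JP \<le> card JN"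
    proof (rule card_inj_on_le)
      show "inj_on (\<lambda>j. j - 1) JP" unfolding JP_def by (auto intro: inj_onI)
      show "(\<lambda>j. j - 1) ` JP \<subseteq> JN"
      proof
        fix x assume "x \<in> (\<lambda>j. j - 1) ` JP"
        then obtain j where j: "j \<in> JP" "x = j - 1" by blast
        have "j \<noteq> 1" using j exits_1_nonempty[OF S] unfolding JP_def by auto
        then have "exits S (j - 1) \<noteq> {}"
          using j exits_1_nonempty[OF S] exits_1_empty_if_consecutive[OF S(1), of "j - 1"]
          unfolding JP_def by auto
        then show "x \<in> JN" using j \<open>j \<noteq> 1\<close> unfolding JP_def JN_def by auto
      qed
      show "finite JN" unfolding JN_def by simp
    qed
    have "2 \<le> card (exits S j)" if "j \<in> JN" for j
      using h that by (intro two_le_card_exits[OF S(1), of h]) (use no_fix in \<open>auto simp: JP_def JN_def\<close>)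
    then have "(\<Sum>j\<in>JN. 2) \<le> (\<Sum>j\<in>JN. card (exits S j))" by (intro sum_mono)
    moreover note \<open>card JP \<le> card JN\<close>
    ultimately show ?thesis using card_JP_JN JN_le by simp
  qed
qed

end

definition circ_shift :: "nat \<Rightarrow> nat \<Rightarrow> int \<Rightarrow> nat" where
  "circ_shift n a k = nat ((int a + k) mod int n)"

definition circ_offsets :: "nat \<Rightarrow> int set" where
  "circ_offsets m = {k. 1 \<le> \<bar>k\<bar> \<and> \<bar>k\<bar> \<le> int m}"

lemma circ_nbrs_eq_image: "circ_nbrs n d i = circ_shift n i ` circ_offsets (d div 2)"
  unfolding circ_nbrs_def circ_offsets_def circ_shift_def by auto

lemma int_circ_shift: "n > 0 \<Longrightarrow> int (circ_shift n a k) = (int a + k) mod int n"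
  unfolding circ_shift_def by simp

lemma circ_shift_less: "n > 0 \<Longrightarrow> circ_shift n a k < n"
  unfolding circ_shift_def by (simp add: nat_less_iff)

lemma circ_shift_circ_shift: "n > 0 \<Longrightarrow> circ_shift n (circ_shift n a k) l = circ_shift n a (k + l)"
  unfolding circ_shift_def by (simp add: mod_add_left_eq add.assoc)

lemma circ_shift_0: "a < n \<Longrightarrow> circ_shift n a 0 = a"
  unfolding circ_shift_def by simp

lemma funpow_circ_shift:
  "n > 0 \<Longrightarrow> a < n \<Longrightarrow> ((\<lambda>x. circ_shift n x c) ^^ j) a = circ_shift n a (c * int j)"
  by (induction j) (simp_all add: circ_shift_0 circ_shift_circ_shift algebra_simps)

lemma circ_shift_eq_iff_dvd: "n > 0 \<Longrightarrow> circ_shift n a k = circ_shift n a l \<longleftrightarrow> int n dvd (k - l)"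
  by (metis int_circ_shift mod_eq_dvd_iff of_nat_eq_iff add_diff_cancel_left)

lemma circ_shift_inj_on:
  assumes "2 * m < n"
  shows "inj_on (circ_shift n a) {k. \<bar>k\<bar> \<le> int m}"
proof (rule inj_onI)
  fix k l assume "k \<in> {k. \<bar>k\<bar> \<le> int m}" "l \<in> {k. \<bar>k\<bar> \<le> int m}" "circ_shift n a k = circ_shift n a l"
  then have "int n dvd (k - l)" "\<bar>k - l\<bar> < int n"
    using assms circ_shift_eq_iff_dvd[of n a k l] by auto
  then show "k = l" using dvd_imp_le_int[of "k - l" "int n"] by fastforce
qed

lemma transitive_injection_circ_shift:
  assumes n: "n > 0" and c: "c = 1 \<or> c = -1"
  shows "transitive_injection {..<n} (\<lambda>x. circ_shift n x c)"
proof
  show "finite {..<n}" by simp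
  show "circ_shift n a c \<in> {..<n}" for a using circ_shift_less[OF n] by simp
  show "inj_on (\<lambda>x. circ_shift n x c) {..<n}"
  proof (rule inj_onI)
    fix x y assume x: "x \<in> {..<n}" and y: "y \<in> {..<n}" and eq: "circ_shift n x c = circ_shift n y c"
    have "x = circ_shift n (circ_shift n x c) (- c)" "y = circ_shift n (circ_shift n y c) (- c)"
      using x y by (simp_all add: circ_shift_circ_shift[OF n] circ_shift_0)
    then show "x = y" unfolding eq by simp
  qed
  fix a b assume a: "a \<in> {..<n}" and b: "b \<in> {..<n}"
  define j where "j = nat ((c * (int b - int a)) mod int n)"
  have "int (circ_shift n a (c * int j)) = (int a + c * ((c * (int b - int a)) mod int n)) mod int n"
    unfolding j_def using n by (simp add: int_circ_shift)
  also have "\<dots> = (int a + c * (c * (int b - int a))) mod int n"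
    by (metis mod_add_right_eq mod_mult_right_eq)
  also have "\<dots> = int b" using c b by auto
  finally show "\<exists>j. ((\<lambda>x. circ_shift n x c) ^^ j) a = b"
    using a funpow_circ_shift[OF n] by (intro exI[of _ j]) simp
qed

lemma sum_card_circ_exits_ge:
  assumes m: "2 * m < n" and c: "c = 1 \<or> c = -1"
    and S: "S \<subseteq> {..<n}" "S \<noteq> {}" "S \<noteq> {..<n}"
  shows "m \<le> (\<Sum>j=1..m. card {a \<in> S. circ_shift n a (c * int j) \<notin> S})"
proof -
  have n: "n > 0" using m by simp
  interpret transitive_injection "{..<n}" "\<lambda>x. circ_shift n x c"
    by (rule transitive_injection_circ_shift[OF n c])
  have "((\<lambda>x. circ_shift n x c) ^^ j) a \<noteq> a" if "a \<in> {..<n}" "0 < j" "j \<le> m" for a j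
  proof -
    have "c * int j \<noteq> 0" "\<bar>c * int j\<bar> < int n" using that m c by auto
    then have "\<not> int n dvd c * int j - 0" by (metis abs_of_nat diff_zero dvd_imp_le_int not_le)
    then have "circ_shift n a (c * int j) \<noteq> circ_shift n a 0"
      using circ_shift_eq_iff_dvd[OF n] by blast
    then show ?thesis using that funpow_circ_shift[OF n] circ_shift_0 by simp
  qed
  then have "m \<le> (\<Sum>j=1..m. card (exits S j))" by (intro sum_card_exits_ge[OF S])
  also have "\<dots> = (\<Sum>j=1..m. card {a \<in> S. circ_shift n a (c * int j) \<notin> S})"
    using S(1) funpow_circ_shift[OF n] unfolding exits_def
    by (intro sum.cong refl arg_cong[where f = card]) auto
  finally show ?thesis .
qed

lemma circ_offsets_eq: "circ_offsets m = int ` {1..m} \<union> (\<lambda>j. - int j) ` {1..m}"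
proof -
  have "k \<in> int ` {1..m} \<union> (\<lambda>j. - int j) ` {1..m}" if "k \<in> circ_offsets m" for k
  proof (cases "k > 0")
    case True
    then have "k = int (nat k)" "nat k \<in> {1..m}" using that unfolding circ_offsets_def by auto
    then show ?thesis by blast
  next
    case False
    then have "k = - int (nat (- k))" "nat (- k) \<in> {1..m}" using that unfolding circ_offsets_def by auto
    then show ?thesis by blast
  qed
  then show ?thesis unfolding circ_offsets_def by auto
qed

lemma finite_circ_offsets: "finite (circ_offsets m)"
  unfolding circ_offsets_eq by simp

lemma card_circ_offsets: "card (circ_offsets m) = 2 * m"
proof -
  have "card (circ_offsets m) = card (int ` {1..m}) + card ((\<lambda>j. - int j) ` {1..m})"
    unfolding circ_offsets_eq by (rule card_Un_disjoint) auto
  also have "\<dots> = m + m" by (subst card_image; auto intro: inj_onI)+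
  finally show ?thesis by simp
qed

locale circulant =
  fixes n d :: nat
  assumes even_d: "even d" and two_le_d: "2 \<le> d" and d_less_n: "d < n"
begin

abbreviation nbrs :: "nat \<Rightarrow> nat set" where
  "nbrs i \<equiv> circ_nbrs n d i"

lemma n_pos: "n > 0"
  using d_less_n by simp

lemma inj_on_circ_shift_offsets: "inj_on (circ_shift n i) {k. \<bar>k\<bar> \<le> int (d div 2)}"
  using even_d d_less_n by (intro circ_shift_inj_on) auto

lemma card_nbrs: "card (nbrs i) = d"
  unfolding circ_nbrs_eq_image using even_d card_circ_offsets[of "d div 2"]
  by (subst card_image) (auto intro: inj_on_subset[OF inj_on_circ_shift_offsets] simp: circ_offsets_def)

lemma nbrs_subset: "nbrs i \<subseteq> {..<n}"
  unfolding circ_nbrs_eq_image using circ_shift_less[OF n_pos] by auto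

lemma finite_nbrs: "finite (nbrs i)"
  using nbrs_subset finite_subset by blast

lemma self_notin_nbrs:
  assumes i: "i < n"
  shows "i \<notin> nbrs i"
proof
  assume "i \<in> nbrs i"
  then obtain k where k: "k \<in> circ_offsets (d div 2)" "circ_shift n i k = circ_shift n i 0"
    using circ_shift_0[OF i] unfolding circ_nbrs_eq_image by auto
  then have "k = 0" using inj_onD[OF inj_on_circ_shift_offsets k(2)] by (auto simp: circ_offsets_def)
  then show False using k(1) by (simp add: circ_offsets_def)
qed

lemma nbrs_sym: "i < n \<Longrightarrow> j \<in> nbrs i \<Longrightarrow> i \<in> nbrs j"
proof -
  assume i: "i < n" and "j \<in> nbrs i"
  then obtain k where k: "k \<in> circ_offsets (d div 2)" "j = circ_shift n i k"
    unfolding circ_nbrs_eq_image by auto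
  then have "circ_shift n j (- k) = i" using i by (simp add: circ_shift_circ_shift[OF n_pos] circ_shift_0)
  moreover have "- k \<in> circ_offsets (d div 2)" using k unfolding circ_offsets_def by auto
  ultimately show "i \<in> nbrs j" unfolding circ_nbrs_eq_image by force
qed

lemma circ_weights_nonneg: "circ_weights n d i j \<ge> 0"
  unfolding circ_weights_def by simp

lemma circ_weights_row: "(\<Sum>j<n. circ_weights n d i j) = 1"
proof -
  have "(\<Sum>j<n. circ_weights n d i j) = (\<Sum>j\<in>{j \<in> {..<n}. j \<in> nbrs i}. 1 / real d)"
    unfolding circ_weights_def card_nbrs by (subst sum.inter_filter) auto
  also have "{j \<in> {..<n}. j \<in> nbrs i} = nbrs i" using nbrs_subset by auto
  finally show ?thesis using card_nbrs two_le_d by simp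
qed

definition boundary_count :: "nat set \<Rightarrow> nat" where
  "boundary_count S = (\<Sum>i\<in>{..<n} - S. card (S \<inter> nbrs i))"

lemma cut_weight_circ_weights:
  assumes "finite S"
  shows "cut_weight (circ_weights n d) ({..<n} - S) S = real (boundary_count S) / real d"
proof -
  have "(\<Sum>j\<in>S. circ_weights n d i j) = real (card (S \<inter> nbrs i)) / real d" for i
  proof -
    have "(\<Sum>j\<in>S. circ_weights n d i j) = (\<Sum>j\<in>{j \<in> S. j \<in> nbrs i}. 1 / real d)"
      unfolding circ_weights_def card_nbrs using assms by (subst sum.inter_filter) auto
    also have "{j \<in> S. j \<in> nbrs i} = S \<inter> nbrs i" by auto
    finally show ?thesis by simp
  qed
  then show ?thesis unfolding cut_weight_def boundary_count_def by (simp add: sum_divide_distrib)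
qed

lemma boundary_count_eq_sum_offsets:
  "boundary_count S = (\<Sum>k\<in>circ_offsets (d div 2). card {i \<in> {..<n} - S. circ_shift n i k \<in> S})"
proof -
  have "card (S \<inter> nbrs i) = card {k \<in> circ_offsets (d div 2). circ_shift n i k \<in> S}" for i
  proof -
    have "S \<inter> nbrs i = circ_shift n i ` {k \<in> circ_offsets (d div 2). circ_shift n i k \<in> S}"
      unfolding circ_nbrs_eq_image by auto
    moreover have "inj_on (circ_shift n i) {k \<in> circ_offsets (d div 2). circ_shift n i k \<in> S}"
      by (rule inj_on_subset[OF inj_on_circ_shift_offsets]) (auto simp: circ_offsets_def)
    ultimately show ?thesis by (simp add: card_image)
  qed
  then have "boundary_count S
      = (\<Sum>i\<in>{..<n} - S. \<Sum>k\<in>circ_offsets (d div 2). if circ_shift n i k \<in> S then 1 else 0)"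
    unfolding boundary_count_def using finite_circ_offsets by (simp add: sum.If_cases Int_def)
  also have "\<dots> = (\<Sum>k\<in>circ_offsets (d div 2). \<Sum>i\<in>{..<n} - S. if circ_shift n i k \<in> S then 1 else 0)"
    by (rule sum.swap)
  also have "\<dots> = (\<Sum>k\<in>circ_offsets (d div 2). card {i \<in> {..<n} - S. circ_shift n i k \<in> S})"
    by (simp add: sum.If_cases Int_def)
  finally show ?thesis .
qed

text \<open>Count the edges leaving the complement, which is also nonempty and proper.\<close>
lemma degree_le_boundary_count:
  assumes S: "S \<subseteq> {..<n}" "S \<noteq> {}" "S \<noteq> {..<n}"
  shows "d \<le> boundary_count S"
proof -
  define C where "C = {..<n} - S"
  have C: "C \<subseteq> {..<n}" "C \<noteq> {}" "C \<noteq> {..<n}" using S unfolding C_def by auto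
  define g where "g k = card {i \<in> C. circ_shift n i k \<notin> C}" for k
  have g_eq: "card {i \<in> {..<n} - S. circ_shift n i k \<in> S} = g k" for k
  proof -
    have "{i \<in> {..<n} - S. circ_shift n i k \<in> S} = {i \<in> C. circ_shift n i k \<notin> C}"
      unfolding C_def using circ_shift_less[OF n_pos] S(1) by auto
    then show ?thesis unfolding g_def by simp
  qed
  have two_m: "2 * (d div 2) < n" using even_d d_less_n by simp
  have "boundary_count S = (\<Sum>k\<in>int ` {1..d div 2}. g k) + (\<Sum>k\<in>(\<lambda>j. - int j) ` {1..d div 2}. g k)"
    unfolding boundary_count_eq_sum_offsets g_eq circ_offsets_eq by (rule sum.union_disjoint) auto
  also have "\<dots> = (\<Sum>j=1..d div 2. g (int j)) + (\<Sum>j=1..d div 2. g (- int j))"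
    by (subst sum.reindex; auto intro: inj_onI)+
  finally have "boundary_count S = (\<Sum>j=1..d div 2. g (1 * int j)) + (\<Sum>j=1..d div 2. g (- 1 * int j))"
    by simp
  moreover have "d div 2 \<le> (\<Sum>j=1..d div 2. g (c * int j))" if "c = 1 \<or> c = -1" for c
    unfolding g_def by (rule sum_card_circ_exits_ge[OF two_m that C])
  moreover have "d = 2 * (d div 2)" using even_d by simp
  ultimately show ?thesis by (metis add_le_mono mult_2)
qed

lemma boundary_count_eq_sum_outer_nbrs:
  assumes S: "S \<subseteq> {..<n}"
  shows "boundary_count S = (\<Sum>j\<in>S. card (nbrs j - S))"
proof -
  have fS: "finite S" using S finite_subset by blast
  have "boundary_count S = (\<Sum>i\<in>{..<n} - S. \<Sum>j\<in>S. if j \<in> nbrs i then 1 else 0)"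
    unfolding boundary_count_def using fS by (simp add: sum.If_cases Int_def)
  also have "\<dots> = (\<Sum>j\<in>S. \<Sum>i\<in>{..<n} - S. if i \<in> nbrs j then 1 else 0)"
  proof (subst sum.swap, intro sum.cong refl)
    fix j i assume "j \<in> S" "i \<in> {..<n} - S"
    then have "j \<in> nbrs i \<longleftrightarrow> i \<in> nbrs j" using S nbrs_sym by blast
    then show "(if j \<in> nbrs i then 1 else 0) = (if i \<in> nbrs j then 1 else (0::nat))" by simp
  qed
  also have "\<dots> = (\<Sum>j\<in>S. card (nbrs j - S))"
  proof (rule sum.cong[OF refl])
    fix j
    have "({..<n} - S) \<inter> {i. i \<in> nbrs j} = nbrs j - S" using nbrs_subset by auto
    then show "(\<Sum>i\<in>{..<n} - S. if i \<in> nbrs j then 1 else 0) = card (nbrs j - S)"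
      by (simp add: sum.If_cases)
  qed
  finally show ?thesis .
qed

lemma boundary_count_ge:
  assumes S: "S \<subseteq> {..<n}"
  shows "real (card S) * (real d + 1 - real (card S)) \<le> real (boundary_count S)"
proof -
  have fS: "finite S" using S finite_subset by blast
  have "real d + 1 - real (card S) \<le> real (card (nbrs j - S))" if j: "j \<in> S" for j
  proof -
    have "nbrs j \<inter> S \<subseteq> S - {j}" using self_notin_nbrs S j by auto
    then have "card (nbrs j \<inter> S) \<le> card S - 1" using fS j by (metis card_Diff_singleton card_mono finite_Diff)
    moreover have "card (nbrs j) = card (nbrs j \<inter> S) + card (nbrs j - S)"
      by (rule card_Int_Diff[OF finite_nbrs])
    moreover have "card S \<ge> 1" using fS j by (metis One_nat_def Suc_leI card_gt_0_iff empty_iff)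
    ultimately have "d + 1 \<le> card (nbrs j - S) + card S" using card_nbrs[of j] by linarith
    then have "real (d + 1) \<le> real (card (nbrs j - S) + card S)" by (simp only: of_nat_le_iff)
    then show ?thesis by simp
  qed
  then have "(\<Sum>j\<in>S. real d + 1 - real (card S)) \<le> (\<Sum>j\<in>S. real (card (nbrs j - S)))"
    by (rule sum_mono)
  then show ?thesis by (simp add: boundary_count_eq_sum_outer_nbrs[OF S])
qed

lemma fixation_prob_circ_clique_le:
  fixes \<rho> :: "nat \<Rightarrow> real"
  assumes r: "r > 0" and \<rho>_pos: "\<And>i. i \<ge> 1 \<Longrightarrow> \<rho> i > 0"
    and ratio: "\<And>k. 1 \<le> k \<Longrightarrow> k < n \<Longrightarrow>
       r * real k * \<rho> k \<le> max 1 (real k * (real d + 1 - real k) / real d)"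
  shows "fixation_prob n (circ_weights n d) (clique_weights n) r \<le> 1 / (\<Sum>j<n. ratio_prod \<rho> j)"
proof (rule fixation_prob_le_birth_death[OF _ r circ_weights_nonneg clique_weights_nonneg
      circ_weights_row clique_weights_row \<rho>_pos])
  show "1 \<le> n" "2 \<le> n" using two_le_d d_less_n by simp_all
  fix S assume S: "S \<subseteq> {..<n}" and ne: "S \<noteq> {}" and lt: "card S < n"
  have fS: "finite S" using S finite_subset by blast
  have k: "1 \<le> card S" using ne fS by (simp add: Suc_le_eq card_gt_0_iff)
  have "real (card S) * (real d + 1 - real (card S)) / real d \<le> real (boundary_count S) / real d"
    by (rule divide_right_mono[OF boundary_count_ge[OF S]]) simp
  moreover have "1 \<le> real (boundary_count S) / real d"
    using degree_le_boundary_count[OF S ne] lt two_le_d by fastforce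
  ultimately have le_cut: "r * real (card S) * \<rho> (card S) \<le> cut_weight (circ_weights n d) ({..<n} - S) S"
    using ratio[OF k lt] unfolding cut_weight_circ_weights[OF fS] by linarith
  have "r * cut_weight (clique_weights n) S ({..<n} - S) * \<rho> (card S)
      = (r * real (card S) * \<rho> (card S)) * (real (n - card S) / real (n - 1))"
    unfolding cut_weight_clique_weights[OF S] by (simp add: algebra_simps)
  also have "\<dots> \<le> r * real (card S) * \<rho> (card S)"
    using k lt r \<rho>_pos[OF k] by (intro mult_left_le) auto
  finally show "r * cut_weight (clique_weights n) S ({..<n} - S) * \<rho> (card S)
      \<le> cut_weight (circ_weights n d) ({..<n} - S) S"
    using le_cut by linarith
qed

lemma fixation_prob_circ_clique_le_exp_partial_sum:
  assumes r: "r > 0"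
  shows "fixation_prob n (circ_weights n d) (clique_weights n) r \<le> 1 / (\<Sum>j<n. (1 / r) ^ j / fact j)"
proof -
  define \<rho> where "\<rho> k = 1 / (r * real k)" for k
  have "ratio_prod \<rho> j = (1 / r) ^ j / fact j" for j
    by (induction j) (simp_all add: ratio_prod_Suc \<rho>_def field_simps)
  moreover have "fixation_prob n (circ_weights n d) (clique_weights n) r \<le> 1 / (\<Sum>j<n. ratio_prod \<rho> j)"
    using r by (intro fixation_prob_circ_clique_le) (auto simp: \<rho>_def)
  ultimately show ?thesis by simp
qed

lemma fixation_prob_circ_clique_le_geometric:
  assumes r: "r > 0" and M: "M \<le> d" "M < n"
  defines "q \<equiv> (real d + 1 - real M) / (real d * r)"
  shows "fixation_prob n (circ_weights n d) (clique_weights n) r \<le> 1 / (\<Sum>j<M+1. q ^ j)"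
proof -
  define \<rho> where "\<rho> k = (if k \<le> M then (real d + 1 - real k) / (real d * r) else 1 / (r * real k))" for k
  have d_pos: "real d > 0" using two_le_d by simp
  have q_pos: "q > 0" unfolding q_def using M r d_pos by (simp add: field_simps)
  have \<rho>_pos: "\<rho> i > 0" if "1 \<le> i" for i
    unfolding \<rho>_def using r d_pos that M by (auto intro!: divide_pos_pos)
  have "r * real k * \<rho> k \<le> max 1 (real k * (real d + 1 - real k) / real d)" if "1 \<le> k" for k
  proof (cases "k \<le> M")
    case True
    then have "r * real k * \<rho> k = real k * (real d + 1 - real k) / real d"
      unfolding \<rho>_def using r d_pos by (simp add: field_simps)
    then show ?thesis by simp
  next
    case False
    then have "r * real k * \<rho> k = 1" unfolding \<rho>_def using r that by simp
    then show ?thesis by simp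
  qed
  then have "fixation_prob n (circ_weights n d) (clique_weights n) r \<le> 1 / (\<Sum>j<n. ratio_prod \<rho> j)"
    by (intro fixation_prob_circ_clique_le[OF r \<rho>_pos])
  moreover have "(\<Sum>j<M+1. q ^ j) \<le> (\<Sum>j<n. ratio_prod \<rho> j)"
  proof -
    have "q ^ j \<le> ratio_prod \<rho> j" if "j \<le> M" for j
    proof -
      have "q ^ j = (\<Prod>i\<in>{1..j}. q)" by simp
      also have "\<dots> \<le> ratio_prod \<rho> j" unfolding ratio_prod_def
        using that q_pos r d_pos by (intro prod_mono) (auto simp: \<rho>_def q_def divide_right_mono)
      finally show ?thesis .
    qed
    then have "(\<Sum>j<M+1. q ^ j) \<le> (\<Sum>j<M+1. ratio_prod \<rho> j)" by (intro sum_mono) auto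
    also have "\<dots> \<le> (\<Sum>j<n. ratio_prod \<rho> j)"
      using M ratio_prod_pos[OF \<rho>_pos] by (intro sum_mono2) (auto intro: less_imp_le)
    finally show ?thesis .
  qed
  moreover have "0 < (\<Sum>j<M+1. q ^ j)" using q_pos by (intro sum_pos) auto
  ultimately show ?thesis by (meson frac_le order.trans order_refl zero_le_one)
qed

end

lemma exp_partial_sums_tendsto: "(\<lambda>n. \<Sum>j<n. x ^ j / fact j) \<longlonglongrightarrow> exp (x :: real)"
  using exp_converges[of x] by (simp add: sums_def divide_inverse_commute)

lemma exp_series_term_tendsto_0: "(\<lambda>n. x ^ n / fact n) \<longlonglongrightarrow> (0 :: real)"
  using exp_converges[of x] by (intro summable_LIMSEQ_zero) (simp add: divide_inverse_commute sums_summable)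

lemma exp_minus_partial_sum_le:
  fixes x :: real
  assumes x: "0 \<le> x" "x < 1"
  shows "exp x - (\<Sum>j<n. x ^ j / fact j) \<le> x ^ n / fact n * (1 / (1 - x))"
proof -
  have s: "summable (\<lambda>j. x ^ j / fact j)" and ex: "exp x = (\<Sum>j. x ^ j / fact j)"
    using exp_converges[of x] by (simp_all add: divide_inverse_commute sums_summable sums_iff)
  have "exp x - (\<Sum>j<n. x ^ j / fact j) = (\<Sum>j. x ^ (j + n) / fact (j + n))"
    unfolding ex using suminf_split_initial_segment[OF s, of n] by simp
  also have "\<dots> \<le> (\<Sum>j. x ^ n / fact n * x ^ j)"
  proof (rule suminf_le)
    fix j
    have "fact n \<le> (fact (j + n) :: real)" by (intro fact_mono) simp
    then have "x ^ n * x ^ j / fact (j + n) \<le> x ^ n * x ^ j / fact n"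
      using x by (intro divide_left_mono) auto
    then show "x ^ (j + n) / fact (j + n) \<le> x ^ n / fact n * x ^ j"
      by (simp add: power_add mult.commute)
    show "summable (\<lambda>j. x ^ (j + n) / fact (j + n))"
      using summable_iff_shift[of "\<lambda>j. x ^ j / fact j" n] s by simp
    show "summable (\<lambda>j. x ^ n / fact n * x ^ j)" using x by (intro summable_mult summable_geometric) simp
  qed
  also have "\<dots> = x ^ n / fact n * (\<Sum>j. x ^ j)"
    using x by (intro suminf_mult summable_geometric) simp
  also have "(\<Sum>j. x ^ j) = 1 / (1 - x)"
    using x by (simp add: suminf_geometric)
  finally show ?thesis .
qed

lemma filterlim_powr_at_top:
  fixes b :: real
  assumes b: "b > 1" and g: "filterlim g at_top F"
  shows "filterlim (\<lambda>x. b powr g x) at_top F"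
proof -
  have "filterlim (\<lambda>x. exp (g x * ln b)) at_top F"
    using b by (intro filterlim_compose[OF exp_at_top] filterlim_at_top_mult_tendsto_pos[OF tendsto_const _ g]) simp
  then show ?thesis using b by (simp add: powr_def)
qed

lemma geometric_partial_sums_tendsto:
  fixes q :: "nat \<Rightarrow> real"
  assumes q: "q \<longlonglongrightarrow> x" and x: "\<bar>x\<bar> < 1" and M: "filterlim M at_top sequentially"
  shows "(\<lambda>n. \<Sum>j<M n. q n ^ j) \<longlonglongrightarrow> 1 / (1 - x)"
proof -
  define c where "c = (\<bar>x\<bar> + 1) / 2"
  have c: "\<bar>x\<bar> < c" "c < 1" using x unfolding c_def by auto
  have ev_q: "\<forall>\<^sub>F n in sequentially. \<bar>q n\<bar> < c"
    using tendsto_rabs[OF q] c(1) by (rule order_tendstoD(2))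
  have "norm c < 1" using c by simp
  then have "(\<lambda>n. c ^ M n) \<longlonglongrightarrow> 0"
    using filterlim_compose[OF LIMSEQ_power_zero[of c] M] by (simp add: o_def)
  moreover have "\<forall>\<^sub>F n in sequentially. norm (q n ^ M n) \<le> c ^ M n"
    using ev_q by eventually_elim (simp add: power_abs power_mono)
  ultimately have "(\<lambda>n. q n ^ M n) \<longlonglongrightarrow> 0" by (rule Lim_null_comparison[rotated])
  then have "(\<lambda>n. (1 - q n ^ M n) / (1 - q n)) \<longlonglongrightarrow> (1 - 0) / (1 - x)"
    using x by (intro tendsto_intros q) auto
  moreover have "\<forall>\<^sub>F n in sequentially. (1 - q n ^ M n) / (1 - q n) = (\<Sum>j<M n. q n ^ j)"
    using ev_q by eventually_elim (use c in \<open>auto simp: sum_gp_strict\<close>)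
  ultimately show ?thesis by (simp add: tendsto_cong)
qed

lemma eventually_fCK_le_exp_partial_sum:
  assumes circ: "\<forall>\<^sub>F n in sequentially. circulant n (d n)" and r: "r > 0"
  shows "\<forall>\<^sub>F n in sequentially. fCK d r n \<le> 1 / (\<Sum>j<n. (1 / r) ^ j / fact j)"
  using circ by eventually_elim
    (simp add: fCK_def circulant.fixation_prob_circ_clique_le_exp_partial_sum[OF _ r])

lemma fCK_exp_bound_gt_1:
  assumes circ: "\<forall>\<^sub>F n in sequentially. circulant n (d n)" and r: "r > 1"
  defines "B \<equiv> \<lambda>n. 1 / (exp (1 / r) - 1 / r ^ n * (1 / fact n) * (1 / (1 - 1 / r)))"
  shows "(\<forall>\<^sub>F n in sequentially. fCK d r n \<le> B n) \<and> B \<longlonglongrightarrow> exp (- 1 / r)"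
proof
  define T where "T n = (1 / r) ^ n / fact n * (1 / (1 - 1 / r))" for n
  have B_eq: "B n = 1 / (exp (1 / r) - T n)" for n
    unfolding B_def T_def by (simp add: power_one_over)
  have "T \<longlonglongrightarrow> 0 * (1 / (1 - 1 / r))"
    unfolding T_def by (intro tendsto_mult_right exp_series_term_tendsto_0)
  then have T: "T \<longlonglongrightarrow> 0" by simp
  have "\<forall>\<^sub>F n in sequentially. T n < exp (1 / r)" using T by (rule order_tendstoD(2)) simp
  moreover have "r > 0" using r by simp
  note eventually_fCK_le_exp_partial_sum[OF circ this]
  ultimately show "\<forall>\<^sub>F n in sequentially. fCK d r n \<le> B n"
  proof eventually_elim
    case (elim n)
    have "exp (1 / r) - T n \<le> (\<Sum>j<n. (1 / r) ^ j / fact j)"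
      using exp_minus_partial_sum_le[of "1 / r" n] r unfolding T_def by simp
    then show ?case unfolding B_eq using elim by (smt (verit) frac_le)
  qed
  have "(\<lambda>n. 1 / (exp (1 / r) - T n)) \<longlonglongrightarrow> 1 / (exp (1 / r) - 0)"
    by (intro tendsto_intros T) simp
  then show "B \<longlonglongrightarrow> exp (- 1 / r)" unfolding B_eq by (simp add: exp_minus inverse_eq_divide)
qed

lemma fCK_exp_bound:
  assumes circ: "\<forall>\<^sub>F n in sequentially. circulant n (d n)" and r: "r > 0"
  shows "\<exists>\<epsilon> :: nat \<Rightarrow> real. \<epsilon> \<longlonglongrightarrow> 0
    \<and> (\<forall>\<^sub>F n in sequentially. fCK d r n \<le> 1 / (exp (1 / r) - 1 / r ^ n * (1 / fact n) - \<epsilon> n))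
    \<and> ((\<lambda>n. 1 / (exp (1 / r) - 1 / r ^ n * (1 / fact n) - \<epsilon> n)) \<longlonglongrightarrow> exp (- 1 / r))"
proof (intro exI conjI)
  define Z where "Z n = (\<Sum>j<n. (1 / r) ^ j / fact j)" for n
  define \<epsilon> where "\<epsilon> n = exp (1 / r) - 1 / r ^ n * (1 / fact n) - Z n" for n
  have Z_eq: "exp (1 / r) - 1 / r ^ n * (1 / fact n) - \<epsilon> n = Z n" for n
    unfolding \<epsilon>_def by simp
  have "\<epsilon> \<longlonglongrightarrow> exp (1 / r) - 0 - exp (1 / r)"
    using exp_series_term_tendsto_0[of "1 / r"] unfolding \<epsilon>_def Z_def
    by (intro tendsto_intros exp_partial_sums_tendsto) (simp add: power_one_over)
  then show "\<epsilon> \<longlonglongrightarrow> 0" by simp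
  show "\<forall>\<^sub>F n in sequentially. fCK d r n \<le> 1 / (exp (1 / r) - 1 / r ^ n * (1 / fact n) - \<epsilon> n)"
    unfolding Z_eq Z_def by (rule eventually_fCK_le_exp_partial_sum[OF circ r])
  have "(\<lambda>n. 1 / Z n) \<longlonglongrightarrow> 1 / exp (1 / r)"
    unfolding Z_def by (intro tendsto_intros exp_partial_sums_tendsto) simp
  then show "(\<lambda>n. 1 / (exp (1 / r) - 1 / r ^ n * (1 / fact n) - \<epsilon> n)) \<longlonglongrightarrow> exp (- 1 / r)"
    unfolding Z_eq by (simp add: exp_minus inverse_eq_divide)
qed

lemma eventually_fCK_le_geometric:
  assumes circ: "\<forall>\<^sub>F n in sequentially. circulant n (d n)" and r: "r > 0"
    and M: "(\<lambda>n. real (M n) / real (d n)) \<longlonglongrightarrow> 0"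
  shows "\<forall>\<^sub>F n in sequentially.
    fCK d r n \<le> 1 / (\<Sum>j<M n + 1. ((real (d n) + 1 - real (M n)) / (real (d n) * r)) ^ j)"
  using circ order_tendstoD(2)[OF M zero_less_one]
proof eventually_elim
  case (elim n)
  interpret circulant n "d n" by (rule elim(1))
  have "M n < d n" using elim(2) two_le_d by (simp add: divide_less_eq)
  then show ?case unfolding fCK_def using d_less_n
    by (intro fixation_prob_circ_clique_le_geometric[OF r]) simp_all
qed

lemma geometric_ratio_tendsto:
  assumes d: "filterlim d at_top sequentially" and M: "(\<lambda>n. real (M n) / real (d n)) \<longlonglongrightarrow> 0"
  shows "(\<lambda>n. (real (d n) + 1 - real (M n)) / (real (d n) * r)) \<longlonglongrightarrow> 1 / r"
proof -
  have "(\<lambda>n. 1 / real (d n)) \<longlonglongrightarrow> 0"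
    using tendsto_inverse_0_at_top[OF filterlim_compose[OF filterlim_real_sequentially d]]
    by (simp add: inverse_eq_divide)
  then have "(\<lambda>n. (1 + 1 / real (d n) - real (M n) / real (d n)) * (1 / r)) \<longlonglongrightarrow> (1 + 0 - 0) * (1 / r)"
    by (intro tendsto_intros M)
  moreover have "\<forall>\<^sub>F n in sequentially. d n \<ge> 1"
    using d by (simp add: filterlim_at_top)
  then have "\<forall>\<^sub>F n in sequentially.
      (1 + 1 / real (d n) - real (M n) / real (d n)) * (1 / r) = (real (d n) + 1 - real (M n)) / (real (d n) * r)"
  proof eventually_elim
    case (elim n)
    then have "1 + 1 / real (d n) - real (M n) / real (d n) = (real (d n) + 1 - real (M n)) / real (d n)"
      by (simp add: field_simps)
    then show ?case by simp
  qed
  ultimately show ?thesis by (simp add: tendsto_cong)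
qed

lemma nat_ceiling_over_tendsto_0:
  assumes g: "(\<lambda>n. g n / real (d n)) \<longlonglongrightarrow> 0" and d: "filterlim d at_top sequentially"
    and g_nonneg: "\<forall>\<^sub>F n in sequentially. g n \<ge> 0" and c: "c \<ge> 0"
  shows "(\<lambda>n. real (nat \<lceil>c * g n\<rceil>) / real (d n)) \<longlonglongrightarrow> 0"
proof (rule tendsto_sandwich[of "\<lambda>_. 0"])
  have "(\<lambda>n. 1 / real (d n)) \<longlonglongrightarrow> 0"
    using tendsto_inverse_0_at_top[OF filterlim_compose[OF filterlim_real_sequentially d]]
    by (simp add: inverse_eq_divide)
  then show "(\<lambda>n. c * (g n / real (d n)) + 1 / real (d n)) \<longlonglongrightarrow> 0"
    using tendsto_add[OF tendsto_mult_left[OF g, of c]] by simp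
  show "\<forall>\<^sub>F n in sequentially. 0 \<le> real (nat \<lceil>c * g n\<rceil>) / real (d n)" by simp
  show "\<forall>\<^sub>F n in sequentially. real (nat \<lceil>c * g n\<rceil>) / real (d n) \<le> c * (g n / real (d n)) + 1 / real (d n)"
    using g_nonneg
  proof eventually_elim
    case (elim n)
    then have "real (nat \<lceil>c * g n\<rceil>) = real_of_int \<lceil>c * g n\<rceil>" using c by simp
    then have "real (nat \<lceil>c * g n\<rceil>) \<le> c * g n + 1" using ceiling_correct[of "c * g n"] by linarith
    then have "real (nat \<lceil>c * g n\<rceil>) / real (d n) \<le> (c * g n + 1) / real (d n)"
      by (simp add: divide_right_mono)
    then show ?case by (simp add: add_divide_distrib)
  qed
qed simp

lemma filterlim_nat_ceiling_at_top:
  fixes g :: "'a \<Rightarrow> real"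
  assumes "filterlim g at_top F"
  shows "filterlim (\<lambda>x. nat \<lceil>g x\<rceil>) at_top F"
  unfolding filterlim_at_top
proof
  fix K :: nat
  have "\<forall>\<^sub>F x in F. real K \<le> g x" using assms by (simp add: filterlim_at_top)
  then show "\<forall>\<^sub>F x in F. K \<le> nat \<lceil>g x\<rceil>"
    by eventually_elim (metis ceiling_mono ceiling_of_nat nat_int nat_mono)
qed

lemma fCK_geometric_bound_gt_1:
  assumes circ: "\<forall>\<^sub>F n in sequentially. circulant n (d n)" and r: "r > 1"
    and d: "filterlim d at_top sequentially"
    and g: "filterlim g at_top sequentially" and g_small: "g \<in> o(\<lambda>n. real (d n))"
  shows "\<exists>\<epsilon> :: nat \<Rightarrow> real. \<epsilon> \<longlonglongrightarrow> 0
    \<and> (\<forall>\<^sub>F n in sequentially. fCK d r n \<le> (1 - 1 / r) * (1 / (1 - 1 / r powr g n - \<epsilon> n)))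
    \<and> ((\<lambda>n. (1 - 1 / r) * (1 / (1 - 1 / r powr g n - \<epsilon> n))) \<longlonglongrightarrow> 1 - 1 / r)"
proof -
  define M where "M n = nat \<lceil>g n\<rceil>" for n
  define S where "S n = (\<Sum>j<M n + 1. ((real (d n) + 1 - real (M n)) / (real (d n) * r)) ^ j)" for n
  have "\<forall>\<^sub>F n in sequentially. g n \<ge> 0" using g by (simp add: filterlim_at_top)
  then have M_d: "(\<lambda>n. real (M n) / real (d n)) \<longlonglongrightarrow> 0"
    using nat_ceiling_over_tendsto_0[OF smalloD_tendsto[OF g_small] d, of 1] unfolding M_def by simp
  have "filterlim (\<lambda>n. M n + 1) at_top sequentially"
    unfolding M_def by (rule filterlim_compose[OF filterlim_add_const_nat_at_top filterlim_nat_ceiling_at_top[OF g]])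
  then have S: "S \<longlonglongrightarrow> 1 / (1 - 1 / r)"
    unfolding S_def using r by (intro geometric_partial_sums_tendsto geometric_ratio_tendsto[OF d M_d]) auto
  have "filterlim (\<lambda>n. r powr g n) at_top sequentially" by (rule filterlim_powr_at_top[OF r g])
  then have r_g: "(\<lambda>n. 1 / r powr g n) \<longlonglongrightarrow> 0"
    using tendsto_inverse_0_at_top by (simp add: inverse_eq_divide)
  define \<epsilon> where "\<epsilon> n = 1 - 1 / r powr g n - (1 - 1 / r) * S n" for n
  have eq: "(1 - 1 / r) * (1 / (1 - 1 / r powr g n - \<epsilon> n)) = 1 / S n" for n
    unfolding \<epsilon>_def using r by simp
  show ?thesis
  proof (intro exI conjI)
    have "\<epsilon> \<longlonglongrightarrow> 1 - 0 - (1 - 1 / r) * (1 / (1 - 1 / r))"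
      unfolding \<epsilon>_def by (intro tendsto_intros r_g S)
    then show "\<epsilon> \<longlonglongrightarrow> 0" using r by simp
    show "\<forall>\<^sub>F n in sequentially. fCK d r n \<le> (1 - 1 / r) * (1 / (1 - 1 / r powr g n - \<epsilon> n))"
      unfolding eq S_def using r by (intro eventually_fCK_le_geometric[OF circ _ M_d]) simp
    have "(\<lambda>n. 1 / S n) \<longlonglongrightarrow> 1 / (1 / (1 - 1 / r))"
      using r by (intro tendsto_intros S) auto
    then show "(\<lambda>n. (1 - 1 / r) * (1 / (1 - 1 / r powr g n - \<epsilon> n))) \<longlonglongrightarrow> 1 - 1 / r"
      unfolding eq by simp
  qed
qed

lemma square_le_tail_bound:
  fixes y r :: real
  assumes y: "0 < y" "y < 1" "y \<le> 1 / r - 1" and r: "0 < r"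
  shows "y * y \<le> (1 - 1 / r) * (1 / (1 - 1 / y))"
proof -
  have "y * y \<le> (1 / r - 1) * y" using y by (simp add: mult_right_mono)
  also have "\<dots> \<le> (1 / r - 1) * y / (1 - y)"
    using y by (simp add: le_divide_eq mult_left_le)
  also have "\<dots> = (1 - 1 / r) * (1 / (1 - 1 / y))"
    using y r by (simp add: field_simps)
  finally show ?thesis .
qed

text \<open>For \<open>r < 1\<close> the single term \<open>q ^ M\<close> of the geometric sum suffices: with \<open>M \<approx> 4 g\<close>
  and \<open>q \<ge> 1 / sqrt r\<close> it gives \<open>fCK \<le> r powr (2 g)\<close>, which is of smaller order than the
  target bound \<open>\<approx> (1 / r - 1) r powr g\<close>.\<close>
lemma fCK_geometric_bound_lt_1:
  assumes circ: "\<forall>\<^sub>F n in sequentially. circulant n (d n)" and r: "0 < r" "r < 1"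
    and d: "filterlim d at_top sequentially"
    and g: "filterlim g at_top sequentially" and g_small: "g \<in> o(\<lambda>n. real (d n))"
  shows "\<forall>\<^sub>F n in sequentially. fCK d r n \<le> (1 - 1 / r) * (1 / (1 - 1 / r powr g n))"
proof -
  define s where "s = sqrt r"
  have s: "0 < s" "s < 1" "s * s = r" unfolding s_def using r by auto
  define M where "M n = nat \<lceil>4 * g n\<rceil>" for n
  define q where "q n = (real (d n) + 1 - real (M n)) / (real (d n) * r)" for n
  have g_nonneg: "\<forall>\<^sub>F n in sequentially. g n \<ge> 0" using g by (simp add: filterlim_at_top)
  then have M_d: "(\<lambda>n. real (M n) / real (d n)) \<longlonglongrightarrow> 0"
    using nat_ceiling_over_tendsto_0[OF smalloD_tendsto[OF g_small] d, of 4] unfolding M_def by simp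
  have "r < s" using mult_strict_left_mono[OF s(2) s(1)] s(3) by simp
  then have "1 / s < 1 / r" using r s by (intro divide_strict_left_mono) auto
  then have ev_q: "\<forall>\<^sub>F n in sequentially. 1 / s < q n"
    unfolding q_def using geometric_ratio_tendsto[OF d M_d] by (rule order_tendstoD(1)[rotated])
  have "filterlim (\<lambda>n. (1 / r) powr g n) at_top sequentially"
    using r by (intro filterlim_powr_at_top g) simp
  from tendsto_inverse_0_at_top[OF this] have y: "(\<lambda>n. r powr g n) \<longlonglongrightarrow> 0"
    using r by (simp add: powr_divide inverse_eq_divide)
  have "\<forall>\<^sub>F n in sequentially. r powr g n < 1" by (rule order_tendstoD(2)[OF y]) simp
  moreover have "\<forall>\<^sub>F n in sequentially. r powr g n < 1 / r - 1" by (rule order_tendstoD(2)[OF y]) (use r in simp)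
  ultimately have ev_y: "\<forall>\<^sub>F n in sequentially. r powr g n < 1 \<and> r powr g n < 1 / r - 1"
    by (rule eventually_conj)
  show ?thesis
    using eventually_fCK_le_geometric[OF circ r(1) M_d] ev_q g_nonneg ev_y
  proof eventually_elim
    case (elim n)
    have q_pos: "q n > 0" using elim(2) s(1) by (meson divide_pos_pos less_trans zero_less_one)
    have "q n ^ M n \<le> (\<Sum>j<M n + 1. q n ^ j)"
      using q_pos by (intro member_le_sum) auto
    moreover have "0 < (\<Sum>j<M n + 1. q n ^ j)" using q_pos by (intro sum_pos) auto
    ultimately have "1 / (\<Sum>j<M n + 1. q n ^ j) \<le> 1 / q n ^ M n"
      using q_pos by (intro divide_left_mono) auto
    then have "fCK d r n \<le> 1 / q n ^ M n"
      using elim(1) unfolding q_def by linarith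
    also have "\<dots> \<le> 1 / (1 / s) ^ M n"
      using elim(2) s q_pos by (intro divide_left_mono power_mono mult_pos_pos zero_less_power) auto
    also have "\<dots> = s powr real (M n)" using s by (simp add: power_one_over powr_realpow)
    also have "\<dots> \<le> s powr (4 * g n)"
    proof (intro powr_mono')
      have "real (M n) = real_of_int \<lceil>4 * g n\<rceil>" unfolding M_def using elim(3) by simp
      then show "4 * g n \<le> real (M n)" by linarith
    qed (use s in auto)
    also have "s powr (4 * g n) = (r powr (1 / 2)) powr (4 * g n)"
      unfolding s_def using r by (simp add: powr_half_sqrt)
    also have "\<dots> = r powr g n * r powr g n"
      by (simp add: powr_powr flip: powr_add)
    also have "\<dots> \<le> (1 - 1 / r) * (1 / (1 - 1 / r powr g n))"
      using elim(4) r by (intro square_le_tail_bound) auto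
    finally show ?case .
  qed
qed

theorem theorem7:
  fixes d :: "nat \<Rightarrow> nat" and r :: real
  assumes d_even: "\<forall>\<^sub>F n in sequentially. even (d n)"
    and d_ge: "\<forall>\<^sub>F n in sequentially. 2 \<le> d n"
    and d_lt: "\<forall>\<^sub>F n in sequentially. d n < n"
    and r_pos: "r > 0"
  shows
   "((\<lambda>n. real (d n)) \<in> \<Theta>(\<lambda>_. 1) \<longrightarrow>
       (r > 1 \<longrightarrow>
          (\<forall>\<^sub>F n in sequentially.
             fCK d r n \<le> 1 / (exp (1 / r) - 1 / r ^ n * (1 / fact n) * (1 / (1 - 1 / r))))
        \<and> ((\<lambda>n. 1 / (exp (1 / r) - 1 / r ^ n * (1 / fact n) * (1 / (1 - 1 / r))))
              \<longlonglongrightarrow> exp (- 1 / r)))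
     \<and> (r \<le> 1 \<longrightarrow>
          (\<exists>\<epsilon> :: nat \<Rightarrow> real. \<epsilon> \<longlonglongrightarrow> 0
             \<and> (\<forall>\<^sub>F n in sequentially.
                  fCK d r n \<le> 1 / (exp (1 / r) - 1 / r ^ n * (1 / fact n) - \<epsilon> n))
             \<and> ((\<lambda>n. 1 / (exp (1 / r) - 1 / r ^ n * (1 / fact n) - \<epsilon> n))
                  \<longlonglongrightarrow> exp (- 1 / r)))))
    \<and> (filterlim d at_top sequentially \<longrightarrow>
       (\<forall>g :: nat \<Rightarrow> real. filterlim g at_top sequentially
            \<and> g \<in> o(\<lambda>n. real (d n)) \<and> r \<noteq> 1 \<longrightarrow>
          (\<exists>\<epsilon> :: nat \<Rightarrow> real. \<epsilon> \<longlonglongrightarrow> 0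
             \<and> (\<forall>\<^sub>F n in sequentially.
                  fCK d r n \<le> (1 - 1 / r) * (1 / (1 - 1 / r powr g n - \<epsilon> n)))
             \<and> (r > 1 \<longrightarrow>
                  ((\<lambda>n. (1 - 1 / r) * (1 / (1 - 1 / r powr g n - \<epsilon> n)))
                     \<longlonglongrightarrow> 1 - 1 / r)))))"
proof -
  have circ: "\<forall>\<^sub>F n in sequentially. circulant n (d n)"
    using d_even d_ge d_lt by eventually_elim (simp add: circulant_def)
  have part_b: "\<exists>\<epsilon> :: nat \<Rightarrow> real. \<epsilon> \<longlonglongrightarrow> 0
      \<and> (\<forall>\<^sub>F n in sequentially. fCK d r n \<le> (1 - 1 / r) * (1 / (1 - 1 / r powr g n - \<epsilon> n)))
      \<and> (r > 1 \<longrightarrow> ((\<lambda>n. (1 - 1 / r) * (1 / (1 - 1 / r powr g n - \<epsilon> n))) \<longlonglongrightarrow> 1 - 1 / r))"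
    if d: "filterlim d at_top sequentially" and g: "filterlim g at_top sequentially"
      and g_small: "g \<in> o(\<lambda>n. real (d n))" and r_ne_1: "r \<noteq> 1" for g :: "nat \<Rightarrow> real"
  proof (cases "r > 1")
    case True
    then show ?thesis using fCK_geometric_bound_gt_1[OF circ True d g g_small] by blast
  next
    case False
    then have "r < 1" using r_ne_1 by simp
    then show ?thesis
      using fCK_geometric_bound_lt_1[OF circ r_pos _ d g g_small] False
      by (intro exI[of _ "\<lambda>_. 0"]) simp
  qed
  \<comment> \<open>Part (a) holds for every degree sequence.\<close>
  show ?thesis
    using fCK_exp_bound_gt_1[OF circ] fCK_exp_bound[OF circ r_pos] part_b by blast
qed

end
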